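(* Let $g\colon[0,\infty)\to\mathbb{R}$ be strictly monotone with $0<c_1\le g(\lambda)<1/2$ for all $\lambda\ge0$ and $|g(\lambda)-g(\lambda')|\le c_2|\lambda-\lambda'|$ for all $\lambda,\lambda'\ge0$, for some constants $c_1>0$ and $c_2<1/2$. Let $f(\lambda,y)=g(\lambda)+y/2$. Then $f$ satisfies $|f(\lambda,y)-f(\lambda',y')|\le\kappa_1|\lambda-\lambda'|+\kappa_2|y-y'|$ with $\kappa_1=c_2$, $\kappa_2=1/2$, $\kappa_1+\kappa_2<1$, and for the strictly stationary process $((N_t,\lambda_t))_{t\in\mathbb{Z}}$ with $N_t\mid\sigma(\lambda_s,N_s:s\le t-1)\sim\mathrm{Poisson}(\lambda_t)$ and $\lambda_t=f(\lambda_{t-1},N_{t-1})$, one has $2g(\lambda_{t-1})=2\lambda_t-\lfloor2\lambda_t\rfloor$ for all $t$, so $\lambda_{t-1}$ (and hence the whole past $(\lambda_s)_{s\le t}$) is a measurable function of $\lambda_t$; in particular the intensity process $(\lambda_t)_{t\in\mathbb{Z}}$ (and hence also $((N_t,\lambda_t))_{t\in\mathbb{Z}}$) is not strongly mixing.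
   Context: Strong mixing of a stationary process $(X_t)_{t\in\mathbb Z}$ means $\alpha(n)=\sup_{A\in\sigma(X_s:s\le0),B\in\sigma(X_s:s\ge n)}|P(A\cap B)-P(A)P(B)|\to0$. $\lfloor x\rfloor$ denotes the integer part. *)

theory Defs
  imports "HOL-Probability.Probability"
begin

definition fmap :: "(real \<Rightarrow> real) \<Rightarrow> real \<Rightarrow> real \<Rightarrow> real" where
  "fmap g l y = g l + y / 2"

definition past_sigma :: "'a measure \<Rightarrow> 'b measure \<Rightarrow> (int \<Rightarrow> 'a \<Rightarrow> 'b) \<Rightarrow> int \<Rightarrow> 'a set set" where
  "past_sigma M S X n = sigma_sets (space M) {X s -` B \<inter> space M | s B. s \<le> n \<and> B \<in> sets S}"

definition future_sigma :: "'a measure \<Rightarrow> 'b measure \<Rightarrow> (int \<Rightarrow> 'a \<Rightarrow> 'b) \<Rightarrow> int \<Rightarrow> 'a set set" where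
  "future_sigma M S X n = sigma_sets (space M) {X s -` B \<inter> space M | s B. s \<ge> n \<and> B \<in> sets S}"

definition alpha_mixing :: "'a measure \<Rightarrow> 'b measure \<Rightarrow> (int \<Rightarrow> 'a \<Rightarrow> 'b) \<Rightarrow> nat \<Rightarrow> real" where
  "alpha_mixing M S X n =
     (SUP AB \<in> past_sigma M S X 0 \<times> future_sigma M S X (int n).
        \<bar>measure M (fst AB \<inter> snd AB) - measure M (fst AB) * measure M (snd AB)\<bar>)"

definition strongly_mixing :: "'a measure \<Rightarrow> 'b measure \<Rightarrow> (int \<Rightarrow> 'a \<Rightarrow> 'b) \<Rightarrow> bool" where
  "strongly_mixing M S X \<longleftrightarrow> alpha_mixing M S X \<longlonglongrightarrow> 0"

definition strictly_stationary :: "'a measure \<Rightarrow> 'b measure \<Rightarrow> (int \<Rightarrow> 'a \<Rightarrow> 'b) \<Rightarrow> bool" where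
  "strictly_stationary M S X \<longleftrightarrow>
     (\<forall>k::int. distr M (PiM UNIV (\<lambda>_. S)) (\<lambda>\<omega> t. X (t + k) \<omega>) =
               distr M (PiM UNIV (\<lambda>_. S)) (\<lambda>\<omega> t. X t \<omega>))"

end

theory Submission imports Defs begin

(* Since 0 <= g < 1/2, the recursion lambda_t = g(lambda_{t-1}) + N_{t-1}/2 splits
   2 lambda_t into its integer part N_{t-1} and its fractional part 2 g(lambda_{t-1}).  A strictly
   monotone g has a Borel left inverse, so lambda_{t-1} is a Borel function of lambda_t, and by
   iterating, lambda_0 is a Borel function of lambda_n for every n >= 0.  Hence the event
   A = {lambda_0 < 1/2} = {N_{-1} = 0} lies both in the past sigma-algebra at time 0 and in
   every future sigma-algebra at time n; by the Poisson property P(A) = E exp(-lambda_{-1}),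
   which lies strictly between 0 and 1 because lambda_{-1} >= c1 > 0.  Such an event gives
   alpha(n) >= P(A)(1 - P(A)) > 0 for all n, so the process is not strongly mixing. *)

text \<open>A strictly increasing function on \<open>[0,\<infinity>)\<close> has a Borel measurable left inverse:
  take the pointwise limit of the monotone (hence Borel) maps
  \<open>z \<mapsto> sup ({0} \<union> {l \<in> [0,n]. G l \<le> z})\<close>.\<close>
lemma strict_mono_on_borel_left_inverse:
  fixes G :: "real \<Rightarrow> real"
  assumes mono_G: "strict_mono_on {0..} G"
  shows "\<exists>h \<in> borel_measurable borel. \<forall>l\<ge>0. h (G l) = l"
proof -
  define S where "S n z = insert 0 {l. 0 \<le> l \<and> l \<le> real n \<and> G l \<le> z}" for n :: nat and z
  define \<psi> where "\<psi> n z = Sup (S n z)" for n z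
  have bdd: "bdd_above (S n z)" for n z
    unfolding S_def by (rule bdd_aboveI[of _ "real n"]) auto
  have "mono (\<psi> n)" for n
    unfolding mono_def \<psi>_def by (intro allI impI cSup_subset_mono bdd) (auto simp: S_def)
  then have \<psi>_meas: "\<psi> n \<in> borel_measurable borel" for n
    by (rule borel_measurable_mono)
  define h where "h z = lim (\<lambda>n. \<psi> n z)" for z
  have h_meas: "h \<in> borel_measurable borel"
    unfolding h_def using \<psi>_meas by measurable
  have "h (G l) = l" if l: "l \<ge> 0" for l
  proof -
    have sublevel: "S n (G l) = {0..l}" if n: "l \<le> real n" for n
    proof -
      have "G x \<le> G l \<longleftrightarrow> x \<le> l" if "0 \<le> x" for x
        using strict_mono_on_less_eq[OF mono_G] that l by simp
      then show ?thesis using l n by (auto simp: S_def)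
    qed
    obtain n0 :: nat where n0: "l \<le> real n0" using real_arch_simple by blast
    have "\<psi> n (G l) = l" if "n \<ge> n0" for n
    proof -
      have "l \<le> real n" using n0 that by (meson of_nat_le_iff order.trans)
      show ?thesis unfolding \<psi>_def sublevel[OF \<open>l \<le> real n\<close>] using l by simp
    qed
    then have "(\<lambda>n. \<psi> n (G l)) \<longlonglongrightarrow> l"
      by (intro tendsto_eventually) (auto simp: eventually_at_top_linorder)
    then show ?thesis unfolding h_def by (rule limI)
  qed
  then show ?thesis using h_meas by blast
qed

lemma strictly_monotone_borel_left_inverse:
  fixes G :: "real \<Rightarrow> real"
  assumes "strict_mono_on {0..} G \<or> (\<forall>x y. 0 \<le> x \<longrightarrow> x < y \<longrightarrow> G y < G x)"
  shows "\<exists>h \<in> borel_measurable borel. \<forall>l\<ge>0. h (G l) = l"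
  using assms
proof
  assume "\<forall>x y. 0 \<le> x \<longrightarrow> x < y \<longrightarrow> G y < G x"
  then have "strict_mono_on {0..} (\<lambda>x. - G x)"
    by (intro strict_mono_onI) auto
  then obtain h where "h \<in> borel_measurable borel" "\<forall>l\<ge>0. h (- G l) = l"
    using strict_mono_on_borel_left_inverse by blast
  then show ?thesis by (intro bexI[of _ "\<lambda>y. h (- y)"]) auto
qed (rule strict_mono_on_borel_left_inverse)

lemma fmap_lipschitz:
  assumes "\<bar>g l - g l'\<bar> \<le> c * \<bar>l - l'\<bar>"
  shows "\<bar>fmap g l y - fmap g l' y'\<bar> \<le> c * \<bar>l - l'\<bar> + 1/2 * \<bar>y - y'\<bar>"
proof -
  have "fmap g l y - fmap g l' y' = (g l - g l') + (y - y') / 2"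
    by (simp add: fmap_def field_simps)
  also have "\<bar>\<dots>\<bar> \<le> \<bar>g l - g l'\<bar> + \<bar>y - y'\<bar> / 2"
    using abs_triangle_ineq[of "g l - g l'" "(y - y') / 2"] by simp
  finally show ?thesis using assms by simp
qed

lemma fmap_integer_fractional_split:
  assumes "0 \<le> g l" "g l < 1/2"
  shows "\<lfloor>2 * fmap g l (real n)\<rfloor> = int n"
    and "frac (2 * fmap g l (real n)) = 2 * g l"
proof -
  have double: "2 * fmap g l (real n) = 2 * g l + real n"
    by (simp add: fmap_def)
  then show floor: "\<lfloor>2 * fmap g l (real n)\<rfloor> = int n"
    using assms by (simp add: floor_eq_iff)
  show "frac (2 * fmap g l (real n)) = 2 * g l"
    using floor double by (simp add: frac_def)
qed

lemma fmap_below_half_iff: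
  assumes "0 \<le> g l" "g l < 1/2"
  shows "fmap g l (real n) < 1/2 \<longleftrightarrow> n = 0"
proof -
  have "fmap g l (real n) < 1/2 \<longleftrightarrow> \<lfloor>2 * fmap g l (real n)\<rfloor> < 1"
    by (simp add: floor_less_iff mult.commute)
  then show ?thesis
    using fmap_integer_fractional_split(1)[of g l, OF assms] by simp
qed

lemma fmap_recover_state:
  assumes inverse: "\<forall>l\<ge>0. gi (g l) = l" and "0 \<le> l" "0 \<le> g l" "g l < 1/2"
  shows "gi (frac (2 * fmap g l (real n)) / 2) = l"
  using fmap_integer_fractional_split(2)[of g l, OF assms(3,4)] inverse \<open>0 \<le> l\<close> by simp

text \<open>An event that is, for every lag \<open>n\<close>, both in the past at time 0 and in the future at
  time \<open>n\<close>, and is neither null nor almost sure, keeps \<open>\<alpha>(n) \<ge> P(A)(1 - P(A)) > 0\<close>.\<close>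
lemma not_strongly_mixing_if_nontrivial_tail_event:
  assumes P: "prob_space M"
    and A: "\<And>n. A \<in> past_sigma M S X 0 \<and> A \<in> future_sigma M S X (int n)"
    and p0: "0 < measure M A" and p1: "measure M A < 1"
  shows "\<not> strongly_mixing M S X"
proof
  assume "strongly_mixing M S X"
  then have lim: "alpha_mixing M S X \<longlonglongrightarrow> 0" unfolding strongly_mixing_def .
  let ?p = "measure M A"
  let ?dep = "\<lambda>AB. \<bar>measure M (fst AB \<inter> snd AB) - measure M (fst AB) * measure M (snd AB)\<bar>"
  have dep_le_2: "?dep AB \<le> 2" for AB
  proof -
    have "?dep AB \<le> \<bar>measure M (fst AB \<inter> snd AB)\<bar> + \<bar>measure M (fst AB)\<bar> * \<bar>measure M (snd AB)\<bar>"
      by (metis abs_mult abs_triangle_ineq4)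
    also have "\<dots> \<le> 1 + 1 * 1"
      using prob_space.prob_le_1[OF P] by (intro add_mono mult_mono) auto
    finally show ?thesis by simp
  qed
  have "?dep (A, A) \<le> alpha_mixing M S X n" for n
    unfolding alpha_mixing_def
    by (rule cSUP_upper) (use A[of n] in \<open>auto intro!: bdd_aboveI2[where M=2] dep_le_2\<close>)
  moreover have "?dep (A, A) = ?p * (1 - ?p)"
    using p0 p1 by (simp add: abs_if algebra_simps)
  ultimately have "?p * (1 - ?p) \<le> 0"
    by (intro LIMSEQ_le_const[OF lim]) auto
  moreover have "0 < ?p * (1 - ?p)" using p0 p1 by simp
  ultimately show False by simp
qed

lemma past_measurable_function_of_present:
  fixes X :: "int \<Rightarrow> 'a \<Rightarrow> 'b" and s t :: int
  assumes step: "\<And>t. \<exists>h \<in> T \<rightarrow>\<^sub>M T. \<forall>\<omega>\<in>space M. X (t - 1) \<omega> = h (X t \<omega>)"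
    and "s \<le> t"
  shows "\<exists>h \<in> T \<rightarrow>\<^sub>M T. \<forall>\<omega>\<in>space M. X s \<omega> = h (X t \<omega>)"
proof -
  have "\<exists>h \<in> T \<rightarrow>\<^sub>M T. \<forall>\<omega>\<in>space M. X (t - int k) \<omega> = h (X t \<omega>)" for k
  proof (induction k)
    case 0
    show ?case by (intro bexI[of _ "\<lambda>x. x"]) auto
  next
    case (Suc k)
    then obtain h where h: "h \<in> T \<rightarrow>\<^sub>M T" "\<forall>\<omega>\<in>space M. X (t - int k) \<omega> = h (X t \<omega>)"
      by blast
    obtain h1 where h1: "h1 \<in> T \<rightarrow>\<^sub>M T" "\<forall>\<omega>\<in>space M. X (t - int k - 1) \<omega> = h1 (X (t - int k) \<omega>)"
      using step by blast
    have "h1 \<circ> h \<in> T \<rightarrow>\<^sub>M T" using h h1 by measurable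
    moreover have "\<forall>\<omega>\<in>space M. X (t - int (Suc k)) \<omega> = (h1 \<circ> h) (X t \<omega>)"
      using h h1 by (simp add: algebra_simps)
    ultimately show ?case by blast
  qed
  from this[of "nat (t - s)"] show ?thesis using \<open>s \<le> t\<close> by simp
qed

lemma intensity_predecessor_measurable:
  fixes lam :: "int \<Rightarrow> 'a \<Rightarrow> real" and N :: "int \<Rightarrow> 'a \<Rightarrow> nat"
  assumes g_mono: "strict_mono_on {0..} g \<or> (\<forall>x y. 0 \<le> x \<longrightarrow> x < y \<longrightarrow> g y < g x)"
    and g_range: "\<And>l. 0 \<le> l \<Longrightarrow> 0 \<le> g l \<and> g l < 1/2"
    and lam_nonneg: "\<And>t \<omega>. \<omega> \<in> space M \<Longrightarrow> 0 \<le> lam t \<omega>"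
    and recur: "\<And>t \<omega>. \<omega> \<in> space M \<Longrightarrow> lam t \<omega> = fmap g (lam (t - 1) \<omega>) (real (N (t - 1) \<omega>))"
  shows "\<exists>h \<in> borel_measurable borel. \<forall>\<omega>\<in>space M. lam (t - 1) \<omega> = h (lam t \<omega>)"
proof -
  obtain gi where gi: "gi \<in> borel_measurable borel" "\<forall>l\<ge>0. gi (g l) = l"
    using strictly_monotone_borel_left_inverse[OF g_mono] by blast
  show ?thesis
  proof (intro bexI ballI)
    show "(\<lambda>x. gi (frac (2 * x) / 2)) \<in> borel_measurable borel"
      unfolding frac_def using gi(1) by measurable
    show "lam (t - 1) \<omega> = gi (frac (2 * lam t \<omega>) / 2)" if "\<omega> \<in> space M" for \<omega>
    proof -
      have "0 \<le> lam (t - 1) \<omega>" using lam_nonneg[OF that] .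
      then have "gi (frac (2 * fmap g (lam (t - 1) \<omega>) (real (N (t - 1) \<omega>))) / 2) = lam (t - 1) \<omega>"
        using fmap_recover_state[where gi=gi and g=g, OF gi(2)] g_range by blast
      then show ?thesis unfolding recur[OF that, of t] by (rule sym)
    qed
  qed
qed

lemma observable_event_past_and_future:
  fixes X :: "int \<Rightarrow> 'a \<Rightarrow> 'b"
  assumes \<phi>: "\<phi> \<in> S \<rightarrow>\<^sub>M T"
    and h: "h \<in> T \<rightarrow>\<^sub>M T"
    and recover: "\<And>\<omega>. \<omega> \<in> space M \<Longrightarrow> \<phi> (X 0 \<omega>) = h (\<phi> (X (int n) \<omega>))"
    and X: "\<And>t \<omega>. \<omega> \<in> space M \<Longrightarrow> X t \<omega> \<in> space S"
    and B: "B \<in> sets T"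
  defines "A \<equiv> {\<omega> \<in> space M. \<phi> (X 0 \<omega>) \<in> B}"
  shows "A \<in> past_sigma M S X 0 \<and> A \<in> future_sigma M S X (int n)"
proof -
  have "A = X 0 -` (\<phi> -` B \<inter> space S) \<inter> space M"
    using X by (auto simp: A_def)
  moreover have "\<phi> -` B \<inter> space S \<in> sets S"
    using measurable_sets[OF \<phi> B] .
  ultimately have past: "A \<in> past_sigma M S X 0"
    unfolding past_sigma_def by (intro sigma_sets.Basic) blast
  have "A = X (int n) -` (\<phi> -` (h -` B \<inter> space T) \<inter> space S) \<inter> space M"
    using X recover measurable_space[OF \<phi>] by (auto simp: A_def)
  moreover have "\<phi> -` (h -` B \<inter> space T) \<inter> space S \<in> sets S"
    using measurable_sets[OF \<phi> measurable_sets[OF h B]] .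
  ultimately have "A \<in> future_sigma M S X (int n)"
    unfolding future_sigma_def by (intro sigma_sets.Basic) blast
  with past show ?thesis by blast
qed

lemma not_strongly_mixing_if_observable_determined_by_future:
  fixes X :: "int \<Rightarrow> 'a \<Rightarrow> 'b"
  assumes P: "prob_space M"
    and \<phi>: "\<phi> \<in> S \<rightarrow>\<^sub>M T"
    and recover: "\<And>n. \<exists>h \<in> T \<rightarrow>\<^sub>M T. \<forall>\<omega>\<in>space M. \<phi> (X 0 \<omega>) = h (\<phi> (X (int n) \<omega>))"
    and X: "\<And>t \<omega>. \<omega> \<in> space M \<Longrightarrow> X t \<omega> \<in> space S"
    and B: "B \<in> sets T"
    and nondegenerate: "0 < measure M {\<omega> \<in> space M. \<phi> (X 0 \<omega>) \<in> B}"
      "measure M {\<omega> \<in> space M. \<phi> (X 0 \<omega>) \<in> B} < 1"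
  shows "\<not> strongly_mixing M S X"
proof (rule not_strongly_mixing_if_nontrivial_tail_event[OF P _ nondegenerate])
  fix n
  obtain h where "h \<in> T \<rightarrow>\<^sub>M T" "\<forall>\<omega>\<in>space M. \<phi> (X 0 \<omega>) = h (\<phi> (X (int n) \<omega>))"
    using recover by blast
  then show "{\<omega> \<in> space M. \<phi> (X 0 \<omega>) \<in> B} \<in> past_sigma M S X 0 \<and>
      {\<omega> \<in> space M. \<phi> (X 0 \<omega>) \<in> B} \<in> future_sigma M S X (int n)"
    using observable_event_past_and_future[where M=M and X=X and n=n, OF \<phi> _ _ X B] by blast
qed

lemma (in prob_space) expectation_exp_neg_strict_bounds:
  fixes L :: "'a \<Rightarrow> real" and c :: real
  assumes L: "L \<in> borel_measurable M" and c: "0 < c" and lower: "\<And>\<omega>. \<omega> \<in> space M \<Longrightarrow> c \<le> L \<omega>"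
  shows "0 < expectation (\<lambda>\<omega>. exp (- L \<omega>))" "expectation (\<lambda>\<omega>. exp (- L \<omega>)) < 1"
proof -
  have bounded: "\<bar>exp (- L \<omega>)\<bar> \<le> 1" if "\<omega> \<in> space M" for \<omega>
    using lower[OF that] c by simp
  have int: "integrable M (\<lambda>\<omega>. exp (- L \<omega>))"
    by (rule integrable_const_bound[where B=1]) (use L bounded in auto)
  have "expectation (\<lambda>\<omega>. exp (- L \<omega>)) \<noteq> 0"
  proof
    assume "expectation (\<lambda>\<omega>. exp (- L \<omega>)) = 0"
    then have "AE \<omega> in M. exp (- L \<omega>) = 0"
      using integral_nonneg_eq_0_iff_AE[OF int] by auto
    then show False by (simp add: AE_False)
  qed
  moreover have "0 \<le> expectation (\<lambda>\<omega>. exp (- L \<omega>))"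
    by (intro integral_nonneg_AE) simp
  ultimately show "0 < expectation (\<lambda>\<omega>. exp (- L \<omega>))" by linarith
  have "expectation (\<lambda>\<omega>. exp (- L \<omega>)) \<le> expectation (\<lambda>_. exp (- c))"
    by (intro integral_mono_AE int) (use lower in auto)
  also have "\<dots> = exp (- c)" by (simp add: prob_space)
  also have "\<dots> < 1" using c by simp
  finally show "expectation (\<lambda>\<omega>. exp (- L \<omega>)) < 1" .
qed

text \<open>Taking the whole space as conditioning event, the conditional Poisson law of \<open>N\<close> given
  intensity \<open>L\<close> yields \<open>P(N = 0) = E exp(-L)\<close>.\<close>
lemma (in prob_space) prob_no_event:
  fixes N :: "'a \<Rightarrow> nat" and L :: "'a \<Rightarrow> real"
  assumes poisson: "\<And>k A. A \<in> sigma_sets (space M) G \<Longrightarrow>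
      prob ({\<omega> \<in> space M. N \<omega> = k} \<inter> A) = (\<integral>\<omega>. indicator A \<omega> * (L \<omega> ^ k / fact k * exp (- L \<omega>)) \<partial>M)"
  shows "prob {\<omega> \<in> space M. N \<omega> = 0} = expectation (\<lambda>\<omega>. exp (- L \<omega>))"
proof -
  have "prob {\<omega> \<in> space M. N \<omega> = 0} = expectation (\<lambda>\<omega>. indicator (space M) \<omega> * exp (- L \<omega>))"
    using poisson[of "space M" 0] by (simp add: sigma_sets_top Int_absorb2)
  also have "\<dots> = expectation (\<lambda>\<omega>. exp (- L \<omega>))"
    by (intro Bochner_Integration.integral_cong) auto
  finally show ?thesis .
qed

text \<open>In the model, \<open>{\<lambda>\<^sub>t\<^sub>+\<^sub>1 < 1/2} = {N\<^sub>t = 0}\<close>, an event of probability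
  \<open>E exp(-\<lambda>\<^sub>t)\<close>, which lies strictly between 0 and 1 because \<open>\<lambda>\<^sub>t \<ge> c > 0\<close>.\<close>
lemma (in prob_space) intensity_below_half_nondegenerate:
  fixes N :: "int \<Rightarrow> 'a \<Rightarrow> nat" and lam :: "int \<Rightarrow> 'a \<Rightarrow> real" and t :: int
  assumes g_bounds: "\<And>l. 0 \<le> l \<Longrightarrow> c \<le> g l \<and> g l < 1/2" and c: "0 < c"
    and lam_meas: "lam t \<in> borel_measurable M"
    and lam_nonneg: "\<And>t \<omega>. \<omega> \<in> space M \<Longrightarrow> 0 \<le> lam t \<omega>"
    and poisson: "\<And>k A. A \<in> sigma_sets (space M) G \<Longrightarrow>
      prob ({\<omega> \<in> space M. N t \<omega> = k} \<inter> A) =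
        (\<integral>\<omega>. indicator A \<omega> * (lam t \<omega> ^ k / fact k * exp (- lam t \<omega>)) \<partial>M)"
    and recur: "\<And>t \<omega>. \<omega> \<in> space M \<Longrightarrow> lam t \<omega> = fmap g (lam (t - 1) \<omega>) (real (N (t - 1) \<omega>))"
  shows "0 < prob {\<omega> \<in> space M. lam (t + 1) \<omega> < 1/2}"
    and "prob {\<omega> \<in> space M. lam (t + 1) \<omega> < 1/2} < 1"
proof -
  have g_range: "0 \<le> g l \<and> g l < 1/2" if "0 \<le> l" for l
    using g_bounds[OF that] c by auto
  have "lam (t + 1) \<omega> < 1/2 \<longleftrightarrow> N t \<omega> = 0" if "\<omega> \<in> space M" for \<omega>
    using fmap_below_half_iff[of g "lam t \<omega>" "N t \<omega>"] g_range[OF lam_nonneg[OF that]]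
      recur[OF that, of "t + 1"] by simp
  then have event: "{\<omega> \<in> space M. lam (t + 1) \<omega> < 1/2} = {\<omega> \<in> space M. N t \<omega> = 0}"
    by auto
  have lam_lower: "c \<le> lam t \<omega>" if "\<omega> \<in> space M" for \<omega>
    using recur[OF that, of t] g_bounds[OF lam_nonneg[OF that, of "t - 1"]] by (simp add: fmap_def)
  have "prob {\<omega> \<in> space M. N t \<omega> = 0} = expectation (\<lambda>\<omega>. exp (- lam t \<omega>))"
    using poisson by (rule prob_no_event)
  then show "0 < prob {\<omega> \<in> space M. lam (t + 1) \<omega> < 1/2}"
    "prob {\<omega> \<in> space M. lam (t + 1) \<omega> < 1/2} < 1"
    using expectation_exp_neg_strict_bounds[OF lam_meas c lam_lower] unfolding event by simp_all
qed

theorem mainTheorem9: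
  fixes g :: "real \<Rightarrow> real" and c1 c2 :: real
    and M :: "'a measure" and N :: "int \<Rightarrow> 'a \<Rightarrow> nat" and lam :: "int \<Rightarrow> 'a \<Rightarrow> real"
  assumes g_mono: "strict_mono_on {0..} g \<or> (\<forall>x y. 0 \<le> x \<longrightarrow> x < y \<longrightarrow> g y < g x)"
    and c1: "0 < c1" and c2: "c2 < 1/2"
    and g_bounds: "\<And>l. 0 \<le> l \<Longrightarrow> c1 \<le> g l \<and> g l < 1/2"
    and g_lip: "\<And>l l'. 0 \<le> l \<Longrightarrow> 0 \<le> l' \<Longrightarrow> \<bar>g l - g l'\<bar> \<le> c2 * \<bar>l - l'\<bar>"
    and P: "prob_space M"
    and N_meas: "\<And>t. N t \<in> M \<rightarrow>\<^sub>M count_space UNIV"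
    and lam_meas: "\<And>t. lam t \<in> borel_measurable M"
    and lam_nonneg: "\<And>t \<omega>. \<omega> \<in> space M \<Longrightarrow> 0 \<le> lam t \<omega>"
    and stat: "strictly_stationary M (count_space UNIV \<Otimes>\<^sub>M borel) (\<lambda>t \<omega>. (N t \<omega>, lam t \<omega>))"
    and poisson: "\<And>t k A. A \<in> sigma_sets (space M)
            ({N s -` B \<inter> space M | s B. s \<le> t - 1} \<union>
             {lam s -` B \<inter> space M | s B. s \<le> t - 1 \<and> B \<in> sets borel}) \<Longrightarrow>
          measure M ({\<omega> \<in> space M. N t \<omega> = k} \<inter> A) =
          (\<integral>\<omega>. indicator A \<omega> * (lam t \<omega> ^ k / fact k * exp (- lam t \<omega>)) \<partial>M)"
    and recur: "\<And>t \<omega>. \<omega> \<in> space M \<Longrightarrow> lam t \<omega> = fmap g (lam (t - 1) \<omega>) (real (N (t - 1) \<omega>))"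
  shows "(\<forall>l l' y y'. 0 \<le> l \<longrightarrow> 0 \<le> l' \<longrightarrow>
            \<bar>fmap g l y - fmap g l' y'\<bar> \<le> c2 * \<bar>l - l'\<bar> + 1/2 * \<bar>y - y'\<bar>)
       \<and> c2 + 1/2 < 1
       \<and> (\<forall>t. \<forall>\<omega>\<in>space M. 2 * g (lam (t - 1) \<omega>) = 2 * lam t \<omega> - of_int \<lfloor>2 * lam t \<omega>\<rfloor>)
       \<and> (\<forall>t. \<exists>h \<in> borel_measurable borel. \<forall>\<omega>\<in>space M. lam (t - 1) \<omega> = h (lam t \<omega>))
       \<and> (\<forall>t s. s \<le> t \<longrightarrow> (\<exists>h \<in> borel_measurable borel. \<forall>\<omega>\<in>space M. lam s \<omega> = h (lam t \<omega>)))
       \<and> \<not> strongly_mixing M borel lam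
       \<and> \<not> strongly_mixing M (count_space UNIV \<Otimes>\<^sub>M borel) (\<lambda>t \<omega>. (N t \<omega>, lam t \<omega>))"
proof -
  interpret prob_space M by (rule P)
  have g_range: "0 \<le> g l \<and> g l < 1/2" if "0 \<le> l" for l
    using g_bounds[OF that] c1 by auto
  have step: "\<exists>h \<in> borel_measurable borel. \<forall>\<omega>\<in>space M. lam (t - 1) \<omega> = h (lam t \<omega>)" for t
    using g_mono g_range lam_nonneg recur by (rule intensity_predecessor_measurable)
  have past: "\<exists>h \<in> borel_measurable borel. \<forall>\<omega>\<in>space M. lam s \<omega> = h (lam t \<omega>)" if "s \<le> t" for s t
    using step that by (rule past_measurable_function_of_present)
  have fractional: "2 * g (lam (t - 1) \<omega>) = 2 * lam t \<omega> - of_int \<lfloor>2 * lam t \<omega>\<rfloor>"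
    if "\<omega> \<in> space M" for t \<omega>
    using fmap_integer_fractional_split(2)[of g "lam (t - 1) \<omega>" "N (t - 1) \<omega>"]
      g_range[OF lam_nonneg[OF that]] recur[OF that, of t]
    by (simp add: frac_def)
  have nondegenerate: "0 < prob {\<omega> \<in> space M. lam 0 \<omega> < 1/2}" "prob {\<omega> \<in> space M. lam 0 \<omega> < 1/2} < 1"
    using intensity_below_half_nondegenerate[where t="-1",
        OF g_bounds c1 lam_meas lam_nonneg poisson[where t="-1"] recur]
    by simp_all
  have recover: "\<exists>h \<in> borel_measurable borel. \<forall>\<omega>\<in>space M. lam 0 \<omega> = h (lam (int n) \<omega>)" for n
    using past[of 0 "int n"] by simp
  show ?thesis
  proof (intro conjI allI impI ballI)
    show "\<bar>fmap g l y - fmap g l' y'\<bar> \<le> c2 * \<bar>l - l'\<bar> + 1/2 * \<bar>y - y'\<bar>"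
      if "0 \<le> l" "0 \<le> l'" for l l' y y'
      using fmap_lipschitz g_lip[OF that] by blast
    show "c2 + 1/2 < 1" using c2 by simp
    show "\<not> strongly_mixing M borel lam"
      by (rule not_strongly_mixing_if_observable_determined_by_future[where \<phi>=id and B="{..<1/2}"])
        (use P recover nondegenerate in auto)
    show "\<not> strongly_mixing M (count_space UNIV \<Otimes>\<^sub>M borel) (\<lambda>t \<omega>. (N t \<omega>, lam t \<omega>))"
      by (rule not_strongly_mixing_if_observable_determined_by_future[where \<phi>=snd and B="{..<1/2}"])
        (use P recover nondegenerate in \<open>auto simp: space_pair_measure\<close>)
  qed (use fractional step past in auto)
qed

end
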